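(* Let $I\subset\mathbb{R}$ be an open interval, let $\bm{a}:I\to\mathbb{R}^2_1$ be a frontal and $r:I\to\mathbb{R}^+$ a smooth positive function, and suppose the pseudo-circle family $C_{(\bm{a}(t),\pm r(t))}$ creates an envelope. Let $E_2$ denote the union of the images of all envelopes created by this family. Then: (1) $\mathcal{D}=E_2$ if $\bm{a}$ is regular at every $t\in I$; (2) $\mathcal{D}=E_2\cup C_{(\bm{a}(t_1),\pm r(t_1))}\cup\cdots\cup C_{(\bm{a}(t_k),\pm r(t_k))}$ if $t_1,\ldots,t_k$ are the singular points of $\bm{a}$.
   Context: All objects are $C^\infty$. The Minkowski plane $\mathbb{R}^2_1$ is $\mathbb{R}^2$ with $\langle\bm{x},\bm{y}\rangle=-x_1y_1+x_2y_2$ and $\|\bm{x}\|^2:=\langle\bm{x},\bm{x}\rangle$; $S^1_1=\{\bm{x}:\langle\bm{x},\bm{x}\rangle=1\}$, $H^1=\{\bm{x}:\langle\bm{x},\bm{x}\rangle=-1\}$. A smooth $\bm{a}:I\to\mathbb{R}^2_1$ is a frontal if there is a smooth $\bm{\nu}:I\to H^1$ or $S^1_1$ with $\langle\frac{d\bm{a}}{dt}(t),\bm{\nu}(t)\rangle=0$ for all $t$; $t$ is a singular point of $\bm{a}$ if $\frac{d\bm{a}}{dt}(t)=0$, and regular otherwise. $C_{(\bm{a}(t),\pm r(t))}=\{\bm{x}:\langle\bm{x}-\bm{a}(t),\bm{x}-\bm{a}(t)\rangle=\pm r(t)^2\}$ (same sign throughout). An envelope of this family is a smooth $f:I\to\mathbb{R}^2_1$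 with $f(t)\in C_{(\bm{a}(t),\pm r(t))}$ and $\langle\frac{df}{dt}(t),f(t)-\bm{a}(t)\rangle=0$ for all $t$. With $F(x,y,t)=\|(x,y)-\bm{a}(t)\|^2\mp r(t)^2$, the $\mathcal{D}$ envelope is $\mathcal{D}=\{(x,y)\in\mathbb{R}^2_1:\exists t\in I,\ F(x,y,t)=\frac{\partial F}{\partial t}(x,y,t)=0\}$. *)

theory Defs
  imports "HOL-Analysis.Analysis"
begin

text \<open>The Minkowski plane is modelled as real \<times> real with the Lorentzian pseudo-scalar product.\<close>

definition mink :: "real \<times> real \<Rightarrow> real \<times> real \<Rightarrow> real" where
  "mink x y = - fst x * fst y + snd x * snd y"

fun nderiv :: "nat \<Rightarrow> (real \<Rightarrow> 'a::real_normed_vector) \<Rightarrow> real \<Rightarrow> 'a" where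
  "nderiv 0 f = f"
| "nderiv (Suc n) f = (\<lambda>t. vector_derivative (nderiv n f) (at t))"

definition smooth_on :: "real set \<Rightarrow> (real \<Rightarrow> 'a::real_normed_vector) \<Rightarrow> bool" where
  "smooth_on I f \<longleftrightarrow> (\<forall>n. \<forall>t\<in>I. nderiv n f differentiable (at t))"

definition frontal :: "real set \<Rightarrow> (real \<Rightarrow> real \<times> real) \<Rightarrow> bool" where
  "frontal I a \<longleftrightarrow> smooth_on I a \<and>
     (\<exists>\<nu>. smooth_on I \<nu> \<and>
        ((\<forall>t\<in>I. mink (\<nu> t) (\<nu> t) = -1) \<or> (\<forall>t\<in>I. mink (\<nu> t) (\<nu> t) = 1)) \<and>
        (\<forall>t\<in>I. mink (vector_derivative a (at t)) (\<nu> t) = 0))"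

text \<open>Pseudo-circle C_(c, +-rho); the sign is sigma in {1,-1}.\<close>

definition pseudo_circle :: "real \<times> real \<Rightarrow> real \<Rightarrow> real \<Rightarrow> (real \<times> real) set" where
  "pseudo_circle c \<sigma> \<rho> = {x. mink (x - c) (x - c) = \<sigma> * \<rho>\<^sup>2}"

definition is_envelope ::
  "real set \<Rightarrow> (real \<Rightarrow> real \<times> real) \<Rightarrow> real \<Rightarrow> (real \<Rightarrow> real) \<Rightarrow> (real \<Rightarrow> real \<times> real) \<Rightarrow> bool" where
  "is_envelope I a \<sigma> r f \<longleftrightarrow> smooth_on I f \<and>
     (\<forall>t\<in>I. f t \<in> pseudo_circle (a t) \<sigma> (r t) \<and>
             mink (vector_derivative f (at t)) (f t - a t) = 0)"

definition envelope_union ::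
  "real set \<Rightarrow> (real \<Rightarrow> real \<times> real) \<Rightarrow> real \<Rightarrow> (real \<Rightarrow> real) \<Rightarrow> (real \<times> real) set" where
  "envelope_union I a \<sigma> r = \<Union>{f ` I | f. is_envelope I a \<sigma> r f}"

definition Ffam :: "(real \<Rightarrow> real \<times> real) \<Rightarrow> real \<Rightarrow> (real \<Rightarrow> real) \<Rightarrow> real \<times> real \<Rightarrow> real \<Rightarrow> real" where
  "Ffam a \<sigma> r p t = mink (p - a t) (p - a t) - \<sigma> * (r t)\<^sup>2"

definition D_env ::
  "real set \<Rightarrow> (real \<Rightarrow> real \<times> real) \<Rightarrow> real \<Rightarrow> (real \<Rightarrow> real) \<Rightarrow> (real \<times> real) set" where
  "D_env I a \<sigma> r = {p. \<exists>t\<in>I. Ffam a \<sigma> r p t = 0 \<and> ((\<lambda>s. Ffam a \<sigma> r p s) has_real_derivative 0) (at t)}"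

end

theory Submission
  imports Defs
begin

(* Differentiating f(t) \<in> C(a(t), +-r(t)) along an envelope f gives <a'(t), f(t) - a(t)> = -+ r r'(t),
   which is exactly the condition dF/dt = 0 at the point f(t); so every envelope lies in D. Since an
   envelope exists, r r' vanishes wherever a' does, so at a singular point the whole pseudo-circle
   lies in D. Conversely, at a regular point t the conditions F = dF/dt = 0 cut the pseudo-circle by
   the line through f(t) in the direction \<nu>(t) orthogonal to a'(t). That line meets the pseudo-circle
   only in f(t) and in its Lorentzian reflection along \<nu>(t), and reflecting f along the smooth
   normal field \<nu> yields a second envelope. *)

section \<open>Smoothness of sums and bilinear products\<close>

definition smooth_upto :: "nat \<Rightarrow> real set \<Rightarrow> (real \<Rightarrow> 'a::real_normed_vector) \<Rightarrow> bool" where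
  "smooth_upto n I f \<longleftrightarrow> (\<forall>m\<le>n. \<forall>t\<in>I. nderiv m f differentiable (at t))"

lemma smooth_on_iff_smooth_upto: "smooth_on I f \<longleftrightarrow> (\<forall>n. smooth_upto n I f)"
  unfolding smooth_on_def smooth_upto_def by auto

lemma smooth_on_imp_differentiable: "smooth_on I f \<Longrightarrow> t \<in> I \<Longrightarrow> f differentiable (at t)"
  unfolding smooth_on_def by (metis nderiv.simps(1))

lemma smooth_upto_mono: "m \<le> n \<Longrightarrow> smooth_upto n I f \<Longrightarrow> smooth_upto m I f"
  unfolding smooth_upto_def by auto

lemma nderiv_Suc_inner: "nderiv (Suc n) f = nderiv n (\<lambda>t. vector_derivative f (at t))"
  by (induction n arbitrary: f) auto

lemma smooth_upto_Suc_iff: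
  "smooth_upto (Suc n) I f \<longleftrightarrow>
     (\<forall>t\<in>I. f differentiable (at t)) \<and> smooth_upto n I (\<lambda>t. vector_derivative f (at t))"
proof -
  have "smooth_upto (Suc n) I f \<longleftrightarrow>
      (\<forall>t\<in>I. nderiv 0 f differentiable (at t)) \<and> (\<forall>m\<le>n. \<forall>t\<in>I. nderiv (Suc m) f differentiable (at t))"
    unfolding smooth_upto_def by (metis (no_types, opaque_lifting) Suc_le_mono le0 not0_implies_Suc)
  then show ?thesis
    unfolding smooth_upto_def nderiv_Suc_inner by simp
qed

lemma vector_derivative_cong_open:
  assumes "open I" "t \<in> I" "\<And>s. s \<in> I \<Longrightarrow> f s = g s"
  shows "vector_derivative f (at t) = vector_derivative g (at t)"
proof -
  have "(f has_vector_derivative D) (at t) \<longleftrightarrow> (g has_vector_derivative D) (at t)" for D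
    using has_vector_derivative_transform_within_open assms by metis
  then show ?thesis unfolding vector_derivative_def by simp
qed

lemma nderiv_cong_open:
  assumes "open I" "\<And>s. s \<in> I \<Longrightarrow> f s = g s" "t \<in> I"
  shows "nderiv n f t = nderiv n g t"
  using assms(3)
proof (induction n arbitrary: t)
  case 0
  then show ?case using assms(2) by simp
next
  case (Suc n)
  then show ?case
    using vector_derivative_cong_open[OF assms(1) Suc.prems, of "nderiv n f" "nderiv n g"] by simp
qed

lemma smooth_upto_cong_open:
  assumes "open I" "\<And>s. s \<in> I \<Longrightarrow> f s = g s" "smooth_upto n I f"
  shows "smooth_upto n I g"
  unfolding smooth_upto_def
proof (intro allI impI ballI)
  fix m t assume "m \<le> n" "t \<in> I"
  then obtain D where "(nderiv m f has_derivative D) (at t)"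
    using assms(3) unfolding smooth_upto_def differentiable_def by blast
  then have "(nderiv m g has_derivative D) (at t)"
    by (rule has_derivative_transform_within_open[OF _ assms(1) \<open>t \<in> I\<close>])
      (rule nderiv_cong_open[OF assms(1,2)])
  then show "nderiv m g differentiable (at t)"
    unfolding differentiable_def by blast
qed

lemma smooth_upto_const: "smooth_upto n I (\<lambda>t. c)"
proof -
  have "nderiv m (\<lambda>t. c) = (if m = 0 then (\<lambda>t. c) else (\<lambda>t. 0))" for m
    by (induction m) auto
  then show ?thesis unfolding smooth_upto_def by auto
qed

lemma smooth_upto_add:
  assumes "open I" "smooth_upto n I u" "smooth_upto n I v"
  shows "smooth_upto n I (\<lambda>t. u t + v t)"
  using assms(2,3)
proof (induction n arbitrary: u v)
  case 0
  then show ?case unfolding smooth_upto_def by auto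
next
  case (Suc n)
  then have du: "\<forall>t\<in>I. u differentiable (at t)" and dv: "\<forall>t\<in>I. v differentiable (at t)"
    and "smooth_upto n I (\<lambda>t. vector_derivative u (at t) + vector_derivative v (at t))"
    by (auto simp: smooth_upto_Suc_iff)
  moreover have "vector_derivative u (at s) + vector_derivative v (at s)
      = vector_derivative (\<lambda>t. u t + v t) (at s)" if "s \<in> I" for s
    using du dv that
    by (metis has_vector_derivative_add vector_derivative_at vector_derivative_works)
  ultimately show ?case
    unfolding smooth_upto_Suc_iff by (auto intro: smooth_upto_cong_open[OF assms(1)])
qed

lemma smooth_upto_bilinear:
  fixes prod :: "'a::real_normed_vector \<Rightarrow> 'b::real_normed_vector \<Rightarrow> 'c::real_normed_vector"
  assumes "open I" "bounded_bilinear prod" "smooth_upto n I f" "smooth_upto n I g"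
  shows "smooth_upto n I (\<lambda>t. prod (f t) (g t))"
  using assms(3,4)
proof (induction n arbitrary: f g)
  have product_rule: "((\<lambda>t. prod (f t) (g t)) has_vector_derivative
      prod (f s) (vector_derivative g (at s)) + prod (vector_derivative f (at s)) (g s)) (at s)"
    if "f differentiable (at s)" "g differentiable (at s)" for f g s
    using bounded_bilinear.has_vector_derivative[OF assms(2)] that
    by (simp add: vector_derivative_works)
  {
    case 0
    then show ?case
      unfolding smooth_upto_def using product_rule differentiableI_vector by fastforce
  next
    case (Suc n)
    then have df: "\<forall>t\<in>I. f differentiable (at t)" and dg: "\<forall>t\<in>I. g differentiable (at t)"
      and f': "smooth_upto n I (\<lambda>t. vector_derivative f (at t))"
      and g': "smooth_upto n I (\<lambda>t. vector_derivative g (at t))"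
      by (auto simp: smooth_upto_Suc_iff)
    have "smooth_upto n I (\<lambda>t. prod (f t) (vector_derivative g (at t))
        + prod (vector_derivative f (at t)) (g t))"
      using Suc.IH smooth_upto_mono[of n "Suc n", OF _ Suc.prems(1)]
        smooth_upto_mono[of n "Suc n", OF _ Suc.prems(2)] f' g'
      by (intro smooth_upto_add[OF assms(1)]) simp_all
    moreover have "prod (f s) (vector_derivative g (at s)) + prod (vector_derivative f (at s)) (g s)
        = vector_derivative (\<lambda>t. prod (f t) (g t)) (at s)" if "s \<in> I" for s
      using product_rule df dg that by (metis vector_derivative_at)
    ultimately have "smooth_upto n I (\<lambda>s. vector_derivative (\<lambda>t. prod (f t) (g t)) (at s))"
      by (rule smooth_upto_cong_open[OF assms(1), rotated])
    moreover have "\<forall>t\<in>I. (\<lambda>t. prod (f t) (g t)) differentiable (at t)"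
      using product_rule df dg differentiableI_vector by blast
    ultimately show ?case
      unfolding smooth_upto_Suc_iff by blast
  }
qed

lemma smooth_on_const: "smooth_on I (\<lambda>t. c)"
  unfolding smooth_on_iff_smooth_upto using smooth_upto_const by blast

lemma smooth_on_cong_open:
  "open I \<Longrightarrow> (\<And>s. s \<in> I \<Longrightarrow> f s = g s) \<Longrightarrow> smooth_on I f \<Longrightarrow> smooth_on I g"
  unfolding smooth_on_iff_smooth_upto using smooth_upto_cong_open by blast

lemma smooth_on_add: "open I \<Longrightarrow> smooth_on I u \<Longrightarrow> smooth_on I v \<Longrightarrow> smooth_on I (\<lambda>t. u t + v t)"
  unfolding smooth_on_iff_smooth_upto using smooth_upto_add by blast

lemma smooth_on_bilinear:
  fixes prod :: "'a::real_normed_vector \<Rightarrow> 'b::real_normed_vector \<Rightarrow> 'c::real_normed_vector"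
  shows "open I \<Longrightarrow> bounded_bilinear prod \<Longrightarrow> smooth_on I f \<Longrightarrow> smooth_on I g
    \<Longrightarrow> smooth_on I (\<lambda>t. prod (f t) (g t))"
  unfolding smooth_on_iff_smooth_upto using smooth_upto_bilinear by blast

lemma smooth_on_diff:
  assumes "open I" "smooth_on I u" "smooth_on I v"
  shows "smooth_on I (\<lambda>t. u t - v t)"
proof -
  have "smooth_on I (\<lambda>t. (-1) *\<^sub>R v t)"
    using smooth_on_bilinear[OF assms(1) bounded_bilinear_scaleR smooth_on_const assms(3)] .
  from smooth_on_add[OF assms(1,2) this] show ?thesis by simp
qed

section \<open>Lorentzian reflections\<close>

lemma bounded_bilinear_mink: "bounded_bilinear mink"
proof
  show "mink (x + x') y = mink x y + mink x' y" "mink x (y + y') = mink x y + mink x y'"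
    "mink (c *\<^sub>R x) y = c *\<^sub>R mink x y" "mink x (c *\<^sub>R y) = c *\<^sub>R mink x y" for x x' y y' c
    by (simp_all add: mink_def algebra_simps)
  show "\<exists>K. \<forall>x y. norm (mink x y) \<le> norm x * norm y * K"
  proof (intro exI allI)
    fix x y :: "real \<times> real"
    have "\<bar>fst x\<bar> \<le> norm x" "\<bar>snd x\<bar> \<le> norm x" "\<bar>fst y\<bar> \<le> norm y" "\<bar>snd y\<bar> \<le> norm y"
      by (cases x, cases y, simp add: norm_Pair real_sqrt_sum_squares_ge1 real_sqrt_sum_squares_ge2)+
    then have "\<bar>fst x * fst y\<bar> \<le> norm x * norm y" "\<bar>snd x * snd y\<bar> \<le> norm x * norm y"
      by (auto simp: abs_mult intro: mult_mono)
    then show "norm (mink x y) \<le> norm x * norm y * 2" by (simp add: mink_def)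
  qed
qed

interpretation mink: bounded_bilinear mink
  by (rule bounded_bilinear_mink)

lemma mink_commute: "mink x y = mink y x"
  by (simp add: mink_def mult.commute)

lemma mink_line_self:
  "mink (y + c *\<^sub>R n) (y + c *\<^sub>R n) = mink y y + c * (2 * mink y n + c * mink n n)"
  by (simp add: mink.add_left mink.add_right mink.scaleR_left mink.scaleR_right mink_commute[of n y]
      algebra_simps)

text \<open>For a null vector n the division by zero makes mink_reflect n the identity, so
  mink_reflect_mink_self holds without any hypothesis on n.\<close>

definition mink_reflect :: "real \<times> real \<Rightarrow> real \<times> real \<Rightarrow> real \<times> real" where
  "mink_reflect n y = y - (2 * mink y n / mink n n) *\<^sub>R n"

lemma mink_reflect_mink_self: "mink (mink_reflect n y) (mink_reflect n y) = mink y y"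
proof (cases "mink n n = 0")
  case True
  then show ?thesis by (simp add: mink_reflect_def)
next
  case False
  have "mink_reflect n y = y + (- 2 * mink y n / mink n n) *\<^sub>R n"
    by (simp add: mink_reflect_def)
  also have "mink \<dots> \<dots> = mink y y"
    using False unfolding mink_line_self by (simp add: field_simps)
  finally show ?thesis .
qed

lemma mink_reflect_orthogonal: "mink x n = 0 \<Longrightarrow> mink x (mink_reflect n y) = mink x y"
  by (simp add: mink_reflect_def mink.diff_right mink.scaleR_right)

lemma mink_orthogonal_collinear:
  fixes A n w :: "real \<times> real"
  assumes "A \<noteq> 0" "n \<noteq> 0" "mink A n = 0" "mink A w = 0"
  obtains c where "w = c *\<^sub>R n"
proof -
  obtain a1 a2 n1 n2 w1 w2 where A: "A = (a1, a2)" and n: "n = (n1, n2)" and w: "w = (w1, w2)"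
    by (cases A, cases n, cases w)
  have "a1 * (n1 * w2 - n2 * w1) = 0" "a2 * (n1 * w2 - n2 * w1) = 0"
    using assms(3,4) unfolding A n w mink_def by simp_all algebra+
  then have det: "n1 * w2 = n2 * w1"
    using assms(1) A by (auto simp: zero_prod_def)
  show thesis
  proof (cases "n1 = 0")
    case True
    then have "n2 \<noteq> 0" using assms(2) n by (auto simp: zero_prod_def)
    then have "w = (w2 / n2) *\<^sub>R n" using det True n w by auto
    then show thesis by (rule that)
  next
    case False
    then have "w = (w1 / n1) *\<^sub>R n" using det n w by (auto simp: field_simps)
    then show thesis by (rule that)
  qed
qed

lemma mink_self_eq_on_line:
  assumes "mink (y + c *\<^sub>R n) (y + c *\<^sub>R n) = mink y y" "mink n n \<noteq> 0"
  shows "c = 0 \<or> y + c *\<^sub>R n = mink_reflect n y"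
proof -
  have "c * (2 * mink y n + c * mink n n) = 0"
    using assms(1) unfolding mink_line_self by simp
  then have "c = 0 \<or> c * mink n n = - 2 * mink y n"
    unfolding mult_eq_0_iff by linarith
  then have "c = 0 \<or> c = - 2 * mink y n / mink n n"
    using assms(2) by (auto simp: field_simps)
  then show ?thesis by (auto simp: mink_reflect_def)
qed

lemma mink_self_eq_orthogonal_cases:
  assumes "A \<noteq> 0" "mink A n = 0" "mink n n \<noteq> 0" "mink A (p - q) = 0" "mink p p = mink q q"
  shows "p = q \<or> p = mink_reflect n q"
proof -
  have "n \<noteq> 0" using assms(3) by (auto simp: mink_def)
  then obtain c where "p - q = c *\<^sub>R n"
    using mink_orthogonal_collinear assms(1,2,4) by blast
  then have "p = q + c *\<^sub>R n" by (simp add: algebra_simps)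
  then show ?thesis using mink_self_eq_on_line[of q c n] assms(3,5) by auto
qed

section \<open>The discriminant set of a pseudo-circle family\<close>

lemma has_real_derivative_mink_self:
  assumes "(y has_vector_derivative y') (at t)"
  shows "((\<lambda>s. mink (y s) (y s)) has_real_derivative 2 * mink y' (y t)) (at t)"
  using mink.has_vector_derivative[OF assms assms]
  by (simp add: has_real_derivative_iff_has_vector_derivative mink_commute[of "y t"])

lemma pseudo_circle_curve_derivative:
  assumes "open I" "t \<in> I"
    and "g differentiable (at t)" "a differentiable (at t)" "r differentiable (at t)"
    and on_circle: "\<And>s. s \<in> I \<Longrightarrow> g s \<in> pseudo_circle (a s) \<sigma> (r s)"
  shows "mink (vector_derivative g (at t)) (g t - a t) - mink (vector_derivative a (at t)) (g t - a t)
    = \<sigma> * r t * vector_derivative r (at t)"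
proof -
  let ?g' = "vector_derivative g (at t)" and ?a' = "vector_derivative a (at t)"
    and ?r' = "vector_derivative r (at t)"
  have "((\<lambda>s. g s - a s) has_vector_derivative ?g' - ?a') (at t)"
    using assms(3,4) by (intro has_vector_derivative_diff) (simp_all add: vector_derivative_works)
  then have "((\<lambda>s. mink (g s - a s) (g s - a s)) has_real_derivative 2 * mink (?g' - ?a') (g t - a t)) (at t)"
    by (rule has_real_derivative_mink_self)
  then have "((\<lambda>s. \<sigma> * (r s)\<^sup>2) has_real_derivative 2 * mink (?g' - ?a') (g t - a t)) (at t)"
    by (rule has_field_derivative_transform_within_open[OF _ assms(1,2)])
      (use on_circle in \<open>simp add: pseudo_circle_def\<close>)
  moreover have "((\<lambda>s. \<sigma> * (r s)\<^sup>2) has_real_derivative \<sigma> * (2 * r t * ?r')) (at t)"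
    using assms(5) unfolding vector_derivative_works has_real_derivative_iff_has_vector_derivative[symmetric]
    by (auto intro!: derivative_eq_intros)
  ultimately have "2 * mink (?g' - ?a') (g t - a t) = \<sigma> * (2 * r t * ?r')"
    by (rule DERIV_unique)
  then show ?thesis by (simp add: mink.diff_left)
qed

lemma envelope_tangency:
  assumes "open I" "is_envelope I a \<sigma> r f" "t \<in> I"
    and "a differentiable (at t)" "r differentiable (at t)"
  shows "mink (vector_derivative a (at t)) (f t - a t) = - (\<sigma> * r t * vector_derivative r (at t))"
  using pseudo_circle_curve_derivative[OF assms(1,3) _ assms(4,5), of f \<sigma>] assms(2,3)
  unfolding is_envelope_def by (auto dest: smooth_on_imp_differentiable)

lemma Ffam_has_real_derivative:
  assumes "a differentiable (at t)" "r differentiable (at t)"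
  shows "(Ffam a \<sigma> r p has_real_derivative
    - 2 * (mink (vector_derivative a (at t)) (p - a t) + \<sigma> * r t * vector_derivative r (at t))) (at t)"
proof -
  let ?a' = "vector_derivative a (at t)" and ?r' = "vector_derivative r (at t)"
  have "((\<lambda>s. p - a s) has_vector_derivative 0 - ?a') (at t)"
    using assms(1) by (intro has_vector_derivative_diff) (simp_all add: vector_derivative_works)
  then have "((\<lambda>s. mink (p - a s) (p - a s)) has_real_derivative 2 * mink (0 - ?a') (p - a t)) (at t)"
    by (rule has_real_derivative_mink_self)
  moreover have "(r has_real_derivative ?r') (at t)"
    using assms(2) by (simp add: vector_derivative_works has_real_derivative_iff_has_vector_derivative)
  ultimately have "((\<lambda>s. mink (p - a s) (p - a s) - \<sigma> * (r s)\<^sup>2) has_real_derivative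
      2 * mink (0 - ?a') (p - a t) - \<sigma> * (2 * r t * ?r')) (at t)"
    by (auto intro!: derivative_eq_intros)
  then show ?thesis
    unfolding Ffam_def[abs_def]
    by (rule DERIV_cong) (simp add: mink.minus_left algebra_simps)
qed

lemma D_env_iff:
  assumes "\<forall>t\<in>I. a differentiable (at t)" "\<forall>t\<in>I. r differentiable (at t)"
  shows "p \<in> D_env I a \<sigma> r \<longleftrightarrow> (\<exists>t\<in>I. p \<in> pseudo_circle (a t) \<sigma> (r t) \<and>
    mink (vector_derivative a (at t)) (p - a t) = - (\<sigma> * r t * vector_derivative r (at t)))"
proof -
  have "(Ffam a \<sigma> r p has_real_derivative 0) (at t) \<longleftrightarrow>
      mink (vector_derivative a (at t)) (p - a t) = - (\<sigma> * r t * vector_derivative r (at t))"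
    if "t \<in> I" for t
    using Ffam_has_real_derivative[of a t r \<sigma> p] DERIV_unique assms that by force
  then show ?thesis
    unfolding D_env_def by (auto simp: Ffam_def pseudo_circle_def)
qed

lemma envelope_mink_reflect:
  assumes "open I" "smooth_on I a" "smooth_on I \<nu>" "e \<noteq> 0"
    and unit: "\<forall>t\<in>I. mink (\<nu> t) (\<nu> t) = e"
    and normal: "\<forall>t\<in>I. mink (vector_derivative a (at t)) (\<nu> t) = 0"
    and "\<forall>t\<in>I. r differentiable (at t)" and f: "is_envelope I a \<sigma> r f"
  shows "is_envelope I a \<sigma> r (\<lambda>t. a t + mink_reflect (\<nu> t) (f t - a t))"
    (is "is_envelope I a \<sigma> r ?g")
proof -
  have "smooth_on I (\<lambda>t. f t - ((2 / e) * mink (f t - a t) (\<nu> t)) *\<^sub>R \<nu> t)"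
    using f assms(1-3) unfolding is_envelope_def
    by (intro smooth_on_diff smooth_on_bilinear[OF _ bounded_bilinear_scaleR]
        smooth_on_bilinear[OF _ bounded_bilinear_mult] smooth_on_bilinear[OF _ bounded_bilinear_mink]
        smooth_on_const) simp_all
  \<comment> \<open>on I the divisor mink (\<nu> t) (\<nu> t) is the constant e\<close>
  then have smooth: "smooth_on I ?g"
    by (rule smooth_on_cong_open[OF assms(1), rotated]) (simp add: unit mink_reflect_def)
  have on_circle: "?g t \<in> pseudo_circle (a t) \<sigma> (r t)" if "t \<in> I" for t
    using f that unfolding is_envelope_def pseudo_circle_def by (simp add: mink_reflect_mink_self)
  have "mink (vector_derivative ?g (at t)) (?g t - a t) = 0" if t: "t \<in> I" for t
  proof -
    have "a differentiable (at t)" "r differentiable (at t)"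
      using assms(2,7) t by (simp_all add: smooth_on_imp_differentiable)
    then have "mink (vector_derivative ?g (at t)) (?g t - a t) - mink (vector_derivative a (at t)) (?g t - a t)
        = \<sigma> * r t * vector_derivative r (at t)"
      using pseudo_circle_curve_derivative[OF assms(1) t] smooth_on_imp_differentiable[OF smooth t]
        on_circle by blast
    moreover have "mink (vector_derivative a (at t)) (?g t - a t) = mink (vector_derivative a (at t)) (f t - a t)"
      using normal t by (simp add: mink_reflect_orthogonal)
    ultimately show ?thesis
      using envelope_tangency[OF assms(1) f t] \<open>a differentiable (at t)\<close> \<open>r differentiable (at t)\<close>
      by simp
  qed
  then show ?thesis
    unfolding is_envelope_def using smooth on_circle by blast
qed

lemma envelope_union_subset_D_env:
  assumes "open I" "\<forall>t\<in>I. a differentiable (at t)" "\<forall>t\<in>I. r differentiable (at t)"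
  shows "envelope_union I a \<sigma> r \<subseteq> D_env I a \<sigma> r"
proof
  fix p assume "p \<in> envelope_union I a \<sigma> r"
  then obtain f t where f: "is_envelope I a \<sigma> r f" and t: "t \<in> I" and p: "p = f t"
    unfolding envelope_union_def by blast
  then show "p \<in> D_env I a \<sigma> r"
    using envelope_tangency[OF assms(1) f t] assms(2,3)
    unfolding D_env_iff[OF assms(2,3)] is_envelope_def by blast
qed

lemma singular_pseudo_circle_subset_D_env:
  assumes "open I" "\<forall>t\<in>I. a differentiable (at t)" "\<forall>t\<in>I. r differentiable (at t)"
    and "is_envelope I a \<sigma> r f" "t \<in> I" "vector_derivative a (at t) = 0"
  shows "pseudo_circle (a t) \<sigma> (r t) \<subseteq> D_env I a \<sigma> r"
proof
  have "\<sigma> * r t * vector_derivative r (at t) = 0"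
    using envelope_tangency[OF assms(1,4,5)] assms(2,3,5,6) by (simp add: mink.zero_left)
  moreover fix p assume "p \<in> pseudo_circle (a t) \<sigma> (r t)"
  ultimately show "p \<in> D_env I a \<sigma> r"
    unfolding D_env_iff[OF assms(2,3)] using assms(5,6) by (auto simp: mink.zero_left)
qed

lemma D_env_subset:
  assumes "open I" "frontal I a" "smooth_on I r" "is_envelope I a \<sigma> r f"
  shows "D_env I a \<sigma> r \<subseteq> envelope_union I a \<sigma> r \<union>
    (\<Union>t\<in>{t\<in>I. vector_derivative a (at t) = 0}. pseudo_circle (a t) \<sigma> (r t))"
proof
  obtain \<nu> e where a: "smooth_on I a" and \<nu>: "smooth_on I \<nu>" and "e \<noteq> 0"
    and unit: "\<forall>t\<in>I. mink (\<nu> t) (\<nu> t) = e"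
    and normal: "\<forall>t\<in>I. mink (vector_derivative a (at t)) (\<nu> t) = 0"
    using assms(2) unfolding frontal_def by (metis zero_neq_neg_one zero_neq_one)
  have da: "\<forall>t\<in>I. a differentiable (at t)" and dr: "\<forall>t\<in>I. r differentiable (at t)"
    using a assms(3) smooth_on_imp_differentiable by blast+
  fix p assume "p \<in> D_env I a \<sigma> r"
  then obtain t where t: "t \<in> I" and p: "p \<in> pseudo_circle (a t) \<sigma> (r t)"
    and tangent: "mink (vector_derivative a (at t)) (p - a t) = - (\<sigma> * r t * vector_derivative r (at t))"
    unfolding D_env_iff[OF da dr] by blast
  show "p \<in> envelope_union I a \<sigma> r \<union>
    (\<Union>t\<in>{t\<in>I. vector_derivative a (at t) = 0}. pseudo_circle (a t) \<sigma> (r t))"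
  proof (cases "vector_derivative a (at t) = 0")
    case True
    then show ?thesis using t p by blast
  next
    case False
    have "p - a t = f t - a t \<or> p - a t = mink_reflect (\<nu> t) (f t - a t)"
    proof (rule mink_self_eq_orthogonal_cases[OF False])
      show "mink (vector_derivative a (at t)) (\<nu> t) = 0" "mink (\<nu> t) (\<nu> t) \<noteq> 0"
        using normal unit \<open>e \<noteq> 0\<close> t by auto
      show "mink (vector_derivative a (at t)) (p - a t - (f t - a t)) = 0"
        using tangent envelope_tangency[OF assms(1,4) t] da dr t by (simp add: mink.diff_right)
      show "mink (p - a t) (p - a t) = mink (f t - a t) (f t - a t)"
        using p assms(4) t unfolding is_envelope_def pseudo_circle_def by auto
    qed
    then have "p = f t \<or> p = a t + mink_reflect (\<nu> t) (f t - a t)"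
      by (auto simp: algebra_simps)
    then show ?thesis
      using envelope_mink_reflect[OF assms(1) a \<nu> \<open>e \<noteq> 0\<close> unit normal dr assms(4)] assms(4) t
      unfolding envelope_union_def by blast
  qed
qed

theorem theorem5:
  fixes I :: "real set" and a :: "real \<Rightarrow> real \<times> real" and r :: "real \<Rightarrow> real" and \<sigma> :: real
  assumes "open I" and "is_interval I" and "I \<noteq> {}"
    and "frontal I a"
    and "smooth_on I r" and "\<forall>t\<in>I. r t > 0"
    and "\<sigma> = 1 \<or> \<sigma> = -1"
    and "\<exists>f. is_envelope I a \<sigma> r f"
  shows "((\<forall>t\<in>I. vector_derivative a (at t) \<noteq> 0) \<longrightarrow>
            D_env I a \<sigma> r = envelope_union I a \<sigma> r)
       \<and> (finite {t\<in>I. vector_derivative a (at t) = 0} \<longrightarrow>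
            D_env I a \<sigma> r = envelope_union I a \<sigma> r \<union>
              (\<Union>t\<in>{t\<in>I. vector_derivative a (at t) = 0}. pseudo_circle (a t) \<sigma> (r t)))"
proof -
  obtain f where f: "is_envelope I a \<sigma> r f"
    using assms(8) by blast
  have da: "\<forall>t\<in>I. a differentiable (at t)" and dr: "\<forall>t\<in>I. r differentiable (at t)"
    using assms(4,5) smooth_on_imp_differentiable unfolding frontal_def by blast+
  have "D_env I a \<sigma> r = envelope_union I a \<sigma> r \<union>
      (\<Union>t\<in>{t\<in>I. vector_derivative a (at t) = 0}. pseudo_circle (a t) \<sigma> (r t))"
    using D_env_subset[OF assms(1,4,5) f] envelope_union_subset_D_env[OF assms(1) da dr]
      singular_pseudo_circle_subset_D_env[OF assms(1) da dr f]
    by blast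
  then show ?thesis by auto
qed

end
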